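(* There are constants $0<c_1<c_2$ such that for all $n\ge1$ and all integers $0\le h\le n^2$, $\left(\frac{c_1 n^2}{n+h}\right)^{n+h}\le |\mathcal F^h_n| \le \left(\frac{c_2 n^2}{n+h}\right)^{n+h}$.
   Context: Graphs are finite and simple. For an integer $h\ge0$, $\mathcal F^h_n$ is the set of graphs $G$ on vertex set $[n]$ such that every cellular embedding of $G$ (components embedded separately, Euler genera added) has Euler genus at most $h$; equivalently, the cycle rank $e(G)-n+\kappa(G)$ is at most $h$, where $\kappa(G)$ is the number of components. *)

theory Defs
  imports Complex_Main
begin

definition simple_graph :: "'a set \<Rightarrow> 'a set set \<Rightarrow> bool" where
  "simple_graph V E \<longleftrightarrow> finite V \<and> (\<forall>e\<in>E. e \<subseteq> V \<and> card e = 2)"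

definition adj_rel :: "'a set set \<Rightarrow> ('a \<times> 'a) set" where
  "adj_rel E = {(u, v). {u, v} \<in> E}"

definition components :: "'a set \<Rightarrow> 'a set set \<Rightarrow> 'a set set" where
  "components V E = V // ((adj_rel E)\<^sup>* \<inter> (V \<times> V))"

definition num_components :: "'a set \<Rightarrow> 'a set set \<Rightarrow> nat" where
  "num_components V E = card (components V E)"

definition cycle_rank :: "'a set \<Rightarrow> 'a set set \<Rightarrow> int" where
  "cycle_rank V E = int (card E) - int (card V) + int (num_components V E)"

definition F_graphs :: "nat \<Rightarrow> nat \<Rightarrow> nat set set set" where
  "F_graphs h n = {E. simple_graph {1..n} E \<and> cycle_rank {1..n} E \<le> int h}"

end

theory Submission
  imports Defs "HOL-Library.FuncSet"
begin

(* A graph on [n] of cycle rank at most h has at most M = n + h edges, and the fewer than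
   N = 2 n^2 pairs of vertices admit at most (e N / M)^M sets of at most M pairs.
   For the lower bound, joining every vertex v >= 2 to a parent in {1..v div 2} yields
   prod (v div 2) >= (n/12)^n distinct spanning trees, none of whose edges lies inside the
   upper half {n div 2 <.. n}. Adding any h of the at least n^2/16 pairs inside the upper half
   keeps the cycle rank at most h, and the tree and the added edges are recovered from the
   union. When n^2 / (16 (n + h)) <= 1 the lower bound only needs one graph. *)

lemma pow_div_fact_le_exp:
  fixes x :: real
  assumes "0 \<le> x"
  shows "x ^ n / fact n \<le> exp x"
proof -
  have "(\<Sum>k\<in>{n}. x ^ k / fact k) \<le> (\<Sum>k. x ^ k / fact k)"
    using assms summable_exp_generic[of x]
    by (intro sum_le_suminf) (auto simp: divide_inverse ac_simps)
  then show ?thesis by (simp add: exp_def divide_inverse ac_simps)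
qed

lemma pow_over_exp_le_fact: "(real n / exp 1) ^ n \<le> fact n"
proof -
  have "real n ^ n / fact n \<le> exp 1 ^ n"
    using pow_div_fact_le_exp[of "real n" n] by (simp add: exp_of_nat_mult [symmetric])
  then show ?thesis by (simp add: power_divide field_simps)
qed

lemma prod_div_2_ge: "(real n / 12) ^ n \<le> real (\<Prod>v\<in>{2..n}. v div 2)"
proof (cases "n = 0")
  case False
  have "(real n / 12) ^ n \<le> (real n / (4 * exp 1)) ^ n"
    using exp_le by (intro power_mono divide_left_mono) auto
  also have "\<dots> = (real n / exp 1) ^ n / 4 ^ n" by (simp add: power_divide)
  also have "\<dots> \<le> fact n / 4 ^ n"
    by (intro divide_right_mono pow_over_exp_le_fact) auto
  also have "\<dots> = (\<Prod>v\<in>{1..n}. real v / 4)"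
    by (simp add: fact_prod prod_dividef)
  also have "\<dots> \<le> (\<Prod>v\<in>{2..n}. real v / 4)"
    using False by (simp add: prod.atLeast_Suc_atMost numeral_2_eq_2 prod_nonneg)
  also have "\<dots> \<le> (\<Prod>v\<in>{2..n}. real (v div 2))"
    by (intro prod_mono) auto
  finally show ?thesis by simp
qed simp

(* Each subset X of size at most M gets weight t^|X| / t^M >= 1, with t = M / N. *)
lemma card_small_subsets_le:
  fixes A :: "'a set" and N M :: nat
  assumes "finite A" "card A \<le> N" "0 < M" "M \<le> N"
  shows "real (card {X. X \<subseteq> A \<and> card X \<le> M}) \<le> (exp 1 * N / M) ^ M"
proof -
  define t :: real where "t = M / N"
  have t: "0 < t" "t \<le> 1" using assms(3,4) by (auto simp: t_def)
  have "real (card {X. X \<subseteq> A \<and> card X \<le> M}) = (\<Sum>X | X \<subseteq> A \<and> card X \<le> M. 1)"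
    by simp
  also have "\<dots> \<le> (\<Sum>X | X \<subseteq> A \<and> card X \<le> M. t ^ card X / t ^ M)"
    using t by (intro sum_mono) (auto intro: power_decreasing)
  also have "\<dots> \<le> (\<Sum>X\<in>Pow A. t ^ card X / t ^ M)"
    using assms(1) t by (intro sum_mono2) auto
  also have "\<dots> = (1 + t) ^ card A / t ^ M"
    using prod_add[OF assms(1), of "\<lambda>_. t" "\<lambda>_. 1"]
    by (simp add: sum_divide_distrib add.commute)
  also have "\<dots> \<le> exp (t * N) / t ^ M"
  proof (intro divide_right_mono)
    have "(1 + t) ^ card A \<le> exp t ^ card A"
      using t by (intro power_mono) auto
    also have "\<dots> \<le> exp (t * N)"
      using t assms(2) by (simp add: exp_of_nat_mult [symmetric] mult.commute)
    finally show "(1 + t) ^ card A \<le> exp (t * N)" .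
  qed (use t in simp)
  also have "\<dots> = (exp 1 * N / M) ^ M"
    using assms(3,4) exp_of_nat_mult[of M 1]
    by (simp add: t_def power_divide power_mult_distrib)
  finally show ?thesis .
qed

lemma pow_le_binomial:
  fixes b :: real
  assumes "1 \<le> b" "b * k \<le> N"
  shows "b ^ k \<le> N choose k"
proof (cases "k = 0")
  case False
  have "real k \<le> N" using assms mult_right_mono[OF assms(1), of "real k"] by linarith
  then have "k \<le> N" by simp
  have "b \<le> N / k" using assms(2) False by (simp add: field_simps)
  then have "b ^ k \<le> (N / k) ^ k" using assms(1) by (intro power_mono) auto
  also have "\<dots> \<le> N choose k" by (rule binomial_ge_n_over_k_pow_k[OF \<open>k \<le> N\<close>])
  finally show ?thesis .
qed simp

lemma sym_adj_rel: "sym (adj_rel E)"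
  unfolding adj_rel_def sym_def by (simp add: insert_commute)

lemma num_components_le_1:
  assumes "r \<in> V" and reach: "\<And>v. v \<in> V \<Longrightarrow> (r, v) \<in> (adj_rel E)\<^sup>*"
  shows "num_components V E \<le> 1"
proof -
  let ?R = "(adj_rel E)\<^sup>* \<inter> V \<times> V"
  have "?R `` {v} = ?R `` {r}" if "v \<in> V" for v
  proof -
    have "(v, r) \<in> (adj_rel E)\<^sup>*"
      using reach[OF that] by (rule symD[OF sym_rtrancl[OF sym_adj_rel]])
    then show ?thesis using reach[OF that] assms(1) that by (auto intro: rtrancl_trans)
  qed
  then have "components V E \<subseteq> {?R `` {r}}"
    unfolding components_def by (auto elim!: quotientE)
  then have "card (components V E) \<le> card {?R `` {r}}" by (intro card_mono) auto
  then show ?thesis unfolding num_components_def by simp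
qed

lemma F_graphs_subset_Pow: "F_graphs h n \<subseteq> Pow {e. e \<subseteq> {1..n} \<and> card e = 2}"
  unfolding F_graphs_def simple_graph_def by blast

lemma finite_F_graphs: "finite (F_graphs h n)"
  by (rule finite_subset[OF F_graphs_subset_Pow]) simp

lemma F_graphs_mono: "h \<le> h' \<Longrightarrow> F_graphs h n \<subseteq> F_graphs h' n"
  unfolding F_graphs_def by auto

lemma card_le_of_mem_F_graphs: "E \<in> F_graphs h n \<Longrightarrow> card E \<le> n + h"
  unfolding F_graphs_def cycle_rank_def by simp

definition parent_maps :: "nat \<Rightarrow> (nat \<Rightarrow> nat) set" where
  "parent_maps n = (\<Pi>\<^sub>E v\<in>{2..n}. {1..v div 2})"

definition parent_tree :: "(nat \<Rightarrow> nat) \<Rightarrow> nat \<Rightarrow> nat set set" where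
  "parent_tree p n = (\<lambda>v. {p v, v}) ` {2..n}"

definition upper_pairs :: "nat \<Rightarrow> nat set set" where
  "upper_pairs n = {e. e \<subseteq> {n div 2<..n} \<and> card e = 2}"

lemma parent_maps_bounds:
  "p \<in> parent_maps n \<Longrightarrow> v \<in> {2..n} \<Longrightarrow> 1 \<le> p v \<and> p v \<le> v div 2"
  unfolding parent_maps_def by auto

lemma card_parent_maps: "card (parent_maps n) = (\<Prod>v\<in>{2..n}. v div 2)"
  unfolding parent_maps_def by (simp add: card_PiE)

lemma card_upper_pairs: "card (upper_pairs n) = (n - n div 2) choose 2"
  unfolding upper_pairs_def using n_subsets[of "{n div 2<..n}" 2] by simp

lemma card_upper_pairs_ge:
  assumes "3 \<le> n"
  shows "real n ^ 2 / 16 \<le> card (upper_pairs n)"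
proof -
  define k where "k = n - n div 2"
  have k: "real n \<le> 2 * real k" "2 \<le> k" using assms unfolding k_def by linarith+
  have "real n ^ 2 / 16 = (real n / 4) ^ 2" by (simp add: power_divide)
  also have "\<dots> \<le> (real k / 2) ^ 2" using k by (intro power_mono) auto
  also have "\<dots> \<le> card (upper_pairs n)"
    using binomial_ge_n_over_k_pow_k[OF k(2), where 'a = real]
    by (simp add: card_upper_pairs k_def)
  finally show ?thesis .
qed

lemma parent_tree_reachable:
  assumes "p \<in> parent_maps n" "parent_tree p n \<subseteq> E" "v \<in> {1..n}"
  shows "(1, v) \<in> (adj_rel E)\<^sup>*"
  using assms(3)
proof (induction v rule: less_induct)
  case (less v)
  show ?case
  proof (cases "v = 1")
    case False
    then have v: "v \<in> {2..n}" using less.prems by auto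
    then have "(1, p v) \<in> (adj_rel E)\<^sup>*"
      using less.IH parent_maps_bounds[OF assms(1) v] by auto
    moreover have "(p v, v) \<in> adj_rel E"
      using assms(2) v unfolding parent_tree_def adj_rel_def by auto
    ultimately show ?thesis by (rule rtrancl_into_rtrancl)
  qed simp
qed

lemma parent_tree_disjoint_upper_pairs:
  assumes "p \<in> parent_maps n"
  shows "parent_tree p n \<inter> upper_pairs n = {}"
proof -
  have "p v \<notin> {n div 2<..n}" if "v \<in> {2..n}" for v
    using parent_maps_bounds[OF assms that] that div_le_mono[of v n 2] by auto
  then show ?thesis unfolding parent_tree_def upper_pairs_def by blast
qed

lemma inj_on_parent_tree: "inj_on (\<lambda>p. parent_tree p n) (parent_maps n)"
proof (rule inj_onI)
  fix p q assume p: "p \<in> parent_maps n" and q: "q \<in> parent_maps n"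
    and eq: "parent_tree p n = parent_tree q n"
  have pq: "p v = q v" if v: "v \<in> {2..n}" for v
  proof -
    have "{p v, v} \<in> parent_tree q n" using v eq unfolding parent_tree_def by blast
    then obtain w where w: "w \<in> {2..n}" "{p v, v} = {q w, w}" unfolding parent_tree_def by blast
    have "p v < v" "q w < w"
      using parent_maps_bounds[OF p v] parent_maps_bounds[OF q w(1)] v w(1) by auto
    then show ?thesis using w(2) by (auto simp: doubleton_eq_iff)
  qed
  show "p = q"
    using p q unfolding parent_maps_def by (rule PiE_ext) (simp add: pq)
qed

lemma parent_tree_Un_mem_F_graphs:
  assumes p: "p \<in> parent_maps n" and S: "S \<subseteq> upper_pairs n" "card S \<le> h" and "1 \<le> n"
  shows "parent_tree p n \<union> S \<in> F_graphs h n"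
proof -
  let ?E = "parent_tree p n \<union> S"
  have "p v \<noteq> v \<and> p v \<in> {1..n}" if "v \<in> {2..n}" for v
    using parent_maps_bounds[OF p that] that by auto
  moreover have "{n div 2<..n} \<subseteq> {1..n}" by auto
  ultimately have simple: "simple_graph {1..n} ?E"
    using S(1) unfolding simple_graph_def parent_tree_def upper_pairs_def by auto
  have "card (parent_tree p n) \<le> n - 1"
    unfolding parent_tree_def using card_image_le[of "{2..n}" "\<lambda>v. {p v, v}"] by simp
  then have "card ?E \<le> n - 1 + h" using card_Un_le[of "parent_tree p n" S] S(2) by linarith
  moreover have "num_components {1..n} ?E \<le> 1"
    using \<open>1 \<le> n\<close> parent_tree_reachable[OF p, of ?E] by (intro num_components_le_1[of 1]) auto
  ultimately have "cycle_rank {1..n} ?E \<le> int h"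
    using \<open>1 \<le> n\<close> unfolding cycle_rank_def by simp
  with simple show ?thesis unfolding F_graphs_def by simp
qed

lemma card_F_graphs_ge_product:
  assumes "1 \<le> n"
  shows "card (parent_maps n) * (card (upper_pairs n) choose h) \<le> card (F_graphs h n)"
proof -
  let ?SS = "{S. S \<subseteq> upper_pairs n \<and> card S = h}"
  let ?G = "\<lambda>(p, S). parent_tree p n \<union> S"
  have "inj_on ?G (parent_maps n \<times> ?SS)"
  proof (rule inj_onI, clarify)
    fix p S q T
    assume p: "p \<in> parent_maps n" and q: "q \<in> parent_maps n"
      and S: "S \<subseteq> upper_pairs n" and T: "T \<subseteq> upper_pairs n"
      and eq: "parent_tree p n \<union> S = parent_tree q n \<union> T"
    note disj = parent_tree_disjoint_upper_pairs[OF p] parent_tree_disjoint_upper_pairs[OF q]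
    have "parent_tree p n = (parent_tree p n \<union> S) - upper_pairs n" using disj S by auto
    also have "\<dots> = (parent_tree q n \<union> T) - upper_pairs n" by (simp only: eq)
    also have "\<dots> = parent_tree q n" using disj T by auto
    finally have "p = q" by (rule inj_onD[OF inj_on_parent_tree _ p q])
    have "S = (parent_tree p n \<union> S) \<inter> upper_pairs n" using disj S by auto
    also have "\<dots> = (parent_tree q n \<union> T) \<inter> upper_pairs n" by (simp only: eq)
    also have "\<dots> = T" using disj T by auto
    finally show "p = q \<and> S = T" using \<open>p = q\<close> by simp
  qed
  moreover have "finite (upper_pairs n)"
    unfolding upper_pairs_def by (rule finite_subset[of _ "Pow {n div 2<..n}"]) auto
  ultimately have "card (?G ` (parent_maps n \<times> ?SS))
      = card (parent_maps n) * (card (upper_pairs n) choose h)"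
    by (simp add: card_image card_cartesian_product n_subsets)
  moreover have "?G ` (parent_maps n \<times> ?SS) \<subseteq> F_graphs h n"
    using parent_tree_Un_mem_F_graphs[OF _ _ _ assms] by auto
  then have "card (?G ` (parent_maps n \<times> ?SS)) \<le> card (F_graphs h n)"
    by (rule card_mono[OF finite_F_graphs])
  ultimately show ?thesis by simp
qed

lemma one_le_card_F_graphs:
  assumes "1 \<le> n"
  shows "1 \<le> card (F_graphs h n)"
proof -
  have "1 \<le> card (parent_maps n)" unfolding card_parent_maps by (simp add: Suc_le_eq)
  also have "\<dots> \<le> card (F_graphs 0 n)" using card_F_graphs_ge_product[OF assms, of 0] by simp
  also have "\<dots> \<le> card (F_graphs h n)" by (intro card_mono finite_F_graphs F_graphs_mono) simp
  finally show ?thesis .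
qed

lemma card_F_graphs_le:
  assumes "1 \<le> n" "h \<le> n ^ 2"
  shows "real (card (F_graphs h n)) \<le> (6 * real n ^ 2 / real (n + h)) ^ (n + h)"
proof -
  let ?P = "{e. e \<subseteq> {1..n} \<and> card e = 2}"
  have "card ?P = n choose 2" using n_subsets[of "{1..n}" 2] by simp
  also have "\<dots> \<le> n ^ 2" by (cases "2 \<le> n") (auto simp: binomial_le_pow binomial_eq_0)
  finally have P: "card ?P \<le> 2 * n ^ 2" by simp
  have M: "n + h \<le> 2 * n ^ 2"
    using assms(2) le_square[of n] unfolding power2_eq_square by linarith
  have "card (F_graphs h n) \<le> card {E. E \<subseteq> ?P \<and> card E \<le> n + h}"
    using F_graphs_subset_Pow[of h n] card_le_of_mem_F_graphs[of _ h n] by (intro card_mono) auto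
  then have "real (card (F_graphs h n)) \<le> card {E. E \<subseteq> ?P \<and> card E \<le> n + h}"
    by simp
  also have "\<dots> \<le> (exp 1 * real (2 * n ^ 2) / real (n + h)) ^ (n + h)"
    using P M assms(1) by (intro card_small_subsets_le) auto
  also have "\<dots> \<le> (6 * real n ^ 2 / real (n + h)) ^ (n + h)"
  proof -
    have "exp 1 * real (2 * n ^ 2) \<le> 6 * real n ^ 2"
      using mult_right_mono[OF exp_le, of "real n ^ 2"] by simp
    then show ?thesis by (intro power_mono divide_right_mono) auto
  qed
  finally show ?thesis .
qed

lemma card_F_graphs_ge:
  assumes "1 \<le> n"
  shows "(1/16 * real n ^ 2 / real (n + h)) ^ (n + h) \<le> real (card (F_graphs h n))"
proof -
  define b where "b = 1/16 * real n ^ 2 / real (n + h)"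
  have "0 \<le> b" by (simp add: b_def)
  have n: "0 < real n" using assms by simp
  show ?thesis
    unfolding b_def [symmetric]
  proof (cases "b \<le> 1")
    case True
    then have "b ^ (n + h) \<le> 1" using \<open>0 \<le> b\<close> by (simp add: power_le_one)
    then show "b ^ (n + h) \<le> real (card (F_graphs h n))"
      using one_le_card_F_graphs[OF assms, of h] by linarith
  next
    case False
    then have "16 * (real n + real h) < real n ^ 2"
      using n by (simp add: b_def field_simps)
    then have "16 * real n < real n * real n" unfolding power2_eq_square distrib_left by linarith
    then have "16 < real n" using n by simp
    then have "3 \<le> n" by simp
    have "b \<le> 1/16 * real n ^ 2 / real n"
      unfolding b_def using n by (intro divide_left_mono) auto
    then have "b \<le> real n / 12" using n by (simp add: power2_eq_square)
    then have "b ^ n \<le> card (parent_maps n)"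
      using \<open>0 \<le> b\<close> prod_div_2_ge[of n] power_mono[of b "real n / 12" n]
      unfolding card_parent_maps by linarith
    moreover have "b ^ h \<le> card (upper_pairs n) choose h"
    proof (rule pow_le_binomial)
      have "b * real h \<le> real n ^ 2 / 16"
        using n unfolding b_def by (simp add: field_simps)
      then show "b * real h \<le> card (upper_pairs n)"
        using card_upper_pairs_ge[OF \<open>3 \<le> n\<close>] by linarith
    qed (use False in simp)
    ultimately have "b ^ n * b ^ h \<le> card (parent_maps n) * (card (upper_pairs n) choose h)"
      using \<open>0 \<le> b\<close> by (simp add: mult_mono)
    also have "\<dots> \<le> card (F_graphs h n)"
      using card_F_graphs_ge_product[OF assms] by (simp only: of_nat_le_iff)
    finally show "b ^ (n + h) \<le> real (card (F_graphs h n))" by (simp add: power_add)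
  qed
qed

theorem proposition3:
  shows "\<exists>c1 c2 :: real. 0 < c1 \<and> c1 < c2 \<and>
    (\<forall>n h :: nat. 1 \<le> n \<longrightarrow> h \<le> n ^ 2 \<longrightarrow>
       (c1 * real n ^ 2 / real (n + h)) ^ (n + h) \<le> real (card (F_graphs h n)) \<and>
       real (card (F_graphs h n)) \<le> (c2 * real n ^ 2 / real (n + h)) ^ (n + h))"
proof (intro exI conjI allI impI)
  fix n h :: nat assume "1 \<le> n" "h \<le> n ^ 2"
  show "(1/16 * real n ^ 2 / real (n + h)) ^ (n + h) \<le> real (card (F_graphs h n))"
    using \<open>1 \<le> n\<close> by (rule card_F_graphs_ge)
  show "real (card (F_graphs h n)) \<le> (6 * real n ^ 2 / real (n + h)) ^ (n + h)"
    using \<open>1 \<le> n\<close> \<open>h \<le> n ^ 2\<close> by (rule card_F_graphs_le)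
qed auto

end
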